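(* Let $W_2\in\{M_2,S_2\}$, where $M_2$ is the space of $2\times 2$ real matrices and $S_2$ is the subspace of real symmetric $2\times2$ matrices, and let $\phi:W_2\to W_2$ be a linear map. Then $\phi$ preserves the Lorentz spectrum (i.e. $\sigma_{\mathcal{K}}(\phi(A))=\sigma_{\mathcal{K}}(A)$ for all $A\in W_2$) if and only if either $\phi(A)=PAP^{-1}$ for all $A\in W_2$, or $\phi(A)=QAQ^{-1}$ for all $A\in W_2$, where $$P=\begin{bmatrix}\alpha&\beta\\ \beta&\alpha\end{bmatrix},\qquad Q=\begin{bmatrix}-\alpha&-\beta\\ \beta&\alpha\end{bmatrix}$$ for some $\alpha,\beta\in\mathbb{R}$ with $\alpha^2-\beta^2=1$, and with $\beta=0$ if $W_2=S_2$.
   Context: The Lorentz cone in $\mathbb{R}^2$ is $\mathcal{K}=\{(x_1,x_2)^T\in\mathbb{R}^2:\ |x_1|\le x_2\}$. For $A\in M_2$, a real number $\lambda$ is a Lorentz eigenvalue (L-eigenvalue) of $A$ if there is a nonzero $x\in\mathbb{R}^2$ with $x\in\mathcal{K}$, $(A-\lambda I)x\in\mathcal{K}$ and $x^T(A-\lambda I)x=0$; such $x$ is an L-eigenvector. The Lorentz spectrum $\sigma_{\mathcal{K}}(A)$ is the set of all L-eigenvalues of $A$. *)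

theory Defs
  imports "HOL-Analysis.Analysis"
begin

definition lorentz_cone :: "(real^2) set" where
  "lorentz_cone = {x. \<bar>x$1\<bar> \<le> x$2}"

definition L_eigenvalue :: "real^2^2 \<Rightarrow> real \<Rightarrow> bool" where
  "L_eigenvalue A l \<longleftrightarrow>
     (\<exists>x::real^2. x \<noteq> 0 \<and> x \<in> lorentz_cone
        \<and> (A - l *\<^sub>R mat 1) *v x \<in> lorentz_cone
        \<and> x \<bullet> ((A - l *\<^sub>R mat 1) *v x) = 0)"

definition L_spectrum :: "real^2^2 \<Rightarrow> real set" where
  "L_spectrum A = {l. L_eigenvalue A l}"

definition sym_mats :: "(real^2^2) set" where
  "sym_mats = {A. transpose A = A}"

definition mat2 :: "real \<Rightarrow> real \<Rightarrow> real \<Rightarrow> real \<Rightarrow> real^2^2" where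
  "mat2 a b c d = vector [vector [a, b], vector [c, d]]"

end

theory Submission
  imports Defs
begin

text \<open>
  In the basis \<open>(1, 1), (-1, 1)\<close> of \<open>\<real>\<^sup>2\<close> the Lorentz cone becomes the nonnegative quadrant,
  so the L-eigenvalues of \<open>A\<close> are the Pareto (complementarity) eigenvalues of the matrix
  \<open>[[p, r], [s, q]]\<close> of \<open>A\<close> in that basis.  In these coordinates conjugation by \<open>P\<close> multiplies
  \<open>r\<close> by \<open>k = (\<alpha> + \<beta>)\<^sup>2\<close> and \<open>s\<close> by \<open>1 / k\<close>, a positive diagonal similarity, and conjugation
  by \<open>Q\<close> moreover swaps \<open>p\<close> with \<open>q\<close> and \<open>r\<close> with \<open>s\<close>; both visibly preserve Pareto spectra.
  Conversely, the Pareto spectrum of a \<open>2 \<times> 2\<close> matrix is explicit: the diagonal entries whose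
  column has a nonnegative off-diagonal entry, plus the eigenvalues with a positive eigenvector.
  Evaluating a linear preserver on nilpotents, the identity, \<open>E\<^sub>1\<^sub>1\<close> and a few positive
  test matrices pins its sixteen coefficients down to exactly these two families.
\<close>

section \<open>Pareto eigenvalues of real 2 \<times> 2 matrices\<close>

text \<open>\<open>l\<close> is a Pareto eigenvalue of \<open>B = [[p, r], [s, q]]\<close> if some nonzero \<open>x \<ge> 0\<close> has
  \<open>(B - l I) x \<ge> 0\<close> and \<open>x \<bullet> (B - l I) x = 0\<close>; the three disjuncts are the cases
  \<open>x = (1, 0)\<close>, \<open>x = (0, 1)\<close> and \<open>x = (t, 1)\<close> (see \<open>pareto_eig_iff_complementarity\<close>).\<close>

definition pareto_eig :: "real \<Rightarrow> real \<Rightarrow> real \<Rightarrow> real \<Rightarrow> real \<Rightarrow> bool" where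
  "pareto_eig p r s q l \<longleftrightarrow> (0 \<le> s \<and> l = p) \<or> (0 \<le> r \<and> l = q) \<or>
     (\<exists>t>0. (p - l) * t + r = 0 \<and> s * t + (q - l) = 0)"

lemma pareto_eigI_pos:
  "t > 0 \<Longrightarrow> (p - l) * t + r = 0 \<Longrightarrow> s * t + (q - l) = 0 \<Longrightarrow> pareto_eig p r s q l"
  unfolding pareto_eig_def by blast

lemma pareto_eig_posE:
  assumes "pareto_eig p r s q l" "l \<noteq> p" "l \<noteq> q"
  obtains t where "t > 0" "r = (l - p) * t" "s * t = l - q"
proof -
  obtain t where "t > 0" "(p - l) * t + r = 0" "s * t + (q - l) = 0"
    using assms unfolding pareto_eig_def by blast
  then show ?thesis by (intro that[of t]) (auto simp: algebra_simps)
qed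

lemma pareto_eig_off_diag_prod:
  assumes "pareto_eig p r s q l" "l \<noteq> p" "l \<noteq> q"
  shows "r * s = (l - p) * (l - q)"
proof -
  obtain t where t: "r = (l - p) * t" "s * t = l - q"
    using pareto_eig_posE[OF assms] by blast
  have "r * s = (l - p) * (s * t)" by (simp add: t(1) algebra_simps)
  then show ?thesis by (simp add: t(2))
qed

lemma pareto_eig_swap: "pareto_eig q s r p l \<longleftrightarrow> pareto_eig p r s q l"
proof -
  have swap: "pareto_eig q s r p l" if "pareto_eig p r s q l" for p r s q
  proof -
    from that consider "0 \<le> s" "l = p" | "0 \<le> r" "l = q"
      | t where "t > 0" "(p - l) * t + r = 0" "s * t + (q - l) = 0"
      unfolding pareto_eig_def by blast
    then show ?thesis
    proof cases
      case 3
      show ?thesis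
        by (rule pareto_eigI_pos[of "1 / t"]) (use 3 in \<open>simp_all add: field_simps\<close>)
    qed (auto simp: pareto_eig_def)
  qed
  show ?thesis using swap[of p r s q] swap[of q s r p] by blast
qed

lemma pareto_eig_diag_scale:
  assumes "k > 0"
  shows "pareto_eig p (k * r) (s / k) q l \<longleftrightarrow> pareto_eig p r s q l"
proof -
  have pos: "(\<exists>t>0. (p - l) * t + k * r = 0 \<and> s / k * t + (q - l) = 0) \<longleftrightarrow>
             (\<exists>t>0. (p - l) * t + r = 0 \<and> s * t + (q - l) = 0)"
  proof
    assume "\<exists>t>0. (p - l) * t + k * r = 0 \<and> s / k * t + (q - l) = 0"
    then obtain t where "t > 0" "(p - l) * t + k * r = 0" "s / k * t + (q - l) = 0" by blast
    then show "\<exists>t>0. (p - l) * t + r = 0 \<and> s * t + (q - l) = 0"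
      using assms by (intro exI[of _ "t / k"]) (auto simp: field_simps)
  next
    assume "\<exists>t>0. (p - l) * t + r = 0 \<and> s * t + (q - l) = 0"
    then obtain t where t: "t > 0" "(p - l) * t + r = 0" "s * t + (q - l) = 0" by blast
    have "(p - l) * (k * t) + k * r = k * ((p - l) * t + r)" by (simp add: algebra_simps)
    then show "\<exists>t>0. (p - l) * t + k * r = 0 \<and> s / k * t + (q - l) = 0"
      using t assms by (intro exI[of _ "k * t"]) auto
  qed
  show ?thesis
    unfolding pareto_eig_def pos using assms by (simp add: zero_le_mult_iff zero_le_divide_iff)
qed

lemma pareto_eig_diag_entries:
  "pareto_eig p r s q p \<or> pareto_eig (-p) (-r) (-s) (-q) (-p)"
  "pareto_eig p r s q q \<or> pareto_eig (-p) (-r) (-s) (-q) (-q)"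
  by (auto simp: pareto_eig_def)

lemma pareto_eig_perron:
  assumes "r > 0" "s > 0"
  shows "pareto_eig c r s c (c + sqrt (r * s))"
proof (rule pareto_eigI_pos[of "sqrt (r / s)"])
  have "sqrt (r * s) = s * sqrt (r / s)"
    using assms by (simp add: real_sqrt_divide real_sqrt_mult field_simps)
  moreover have "sqrt (r / s) * sqrt (r / s) = r / s" using assms by simp
  ultimately show "(c - (c + sqrt (r * s))) * sqrt (r / s) + r = 0"
    using assms by (simp add: algebra_simps)
qed (use assms in \<open>simp_all add: real_sqrt_mult real_sqrt_divide field_simps\<close>)

text \<open>Off-diagonal entries of equal strict sign would give the matrix or its negative a Perron
  root beyond its diagonal entry \<open>\<plusminus>c\<close>.\<close>

lemma pareto_spectrum_scalar:
  assumes "\<And>l. pareto_eig p r s q l \<Longrightarrow> l = c"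
    and "\<And>l. pareto_eig (-p) (-r) (-s) (-q) l \<Longrightarrow> l = -c"
  shows "p = c" "q = c" "r * s \<le> 0"
proof -
  show p: "p = c" and q: "q = c" using pareto_eig_diag_entries assms by (metis neg_equal_iff_equal)+
  have "\<not> (r > 0 \<and> s > 0)"
    using assms(1) pareto_eig_perron[of r s c] p q by fastforce
  moreover have "\<not> (r < 0 \<and> s < 0)"
    using assms(2) pareto_eig_perron[of "-r" "-s" "-c"] p q by fastforce
  ultimately show "r * s \<le> 0" by (auto simp: mult_le_0_iff not_less)
qed

lemma pareto_eig_scalar: "pareto_eig c 0 0 c l \<longleftrightarrow> l = c"
  by (auto simp: pareto_eig_def)

lemma pareto_eig_unit11: "pareto_eig c 0 0 0 l \<longleftrightarrow> l = c \<or> l = 0"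
  by (auto simp: pareto_eig_def)

lemma pareto_eig_nilpotent:
  "pareto_eig 0 r 0 0 l \<longleftrightarrow> l = 0" "pareto_eig 0 0 s 0 l \<longleftrightarrow> l = 0"
  by (auto simp: pareto_eig_def)

lemma pareto_eig_exchange:
  "pareto_eig 0 1 1 0 l \<longleftrightarrow> l = 0 \<or> l = 1"
  "pareto_eig 0 (-1) (-1) 0 l \<longleftrightarrow> l = -1"
proof -
  have unit_root: "t * t = 1 \<and> t > 0 \<longleftrightarrow> t = 1" for t :: real
    using power2_eq_1_iff[of t] by (auto simp: power2_eq_square)
  have "pareto_eig 0 1 1 0 l \<longleftrightarrow> l = 0 \<or> (l * l = 1 \<and> l > 0)"
    "pareto_eig 0 (-1) (-1) 0 l \<longleftrightarrow> (-l) * (-l) = 1 \<and> -l > 0"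
    unfolding pareto_eig_def by (auto simp: algebra_simps intro!: exI[of _ "-l"])
  then show "pareto_eig 0 1 1 0 l \<longleftrightarrow> l = 0 \<or> l = 1" "pareto_eig 0 (-1) (-1) 0 l \<longleftrightarrow> l = -1"
    unfolding unit_root by auto
qed

lemma pareto_eig_iff_complementarity:
  "pareto_eig p r s q l \<longleftrightarrow> (\<exists>x1 x2. 0 \<le> x1 \<and> 0 \<le> x2 \<and> (x1 \<noteq> 0 \<or> x2 \<noteq> 0) \<and>
      0 \<le> (p - l) * x1 + r * x2 \<and> 0 \<le> s * x1 + (q - l) * x2 \<and>
      x1 * ((p - l) * x1 + r * x2) + x2 * (s * x1 + (q - l) * x2) = 0)"
  (is "_ \<longleftrightarrow> (\<exists>x1 x2. ?C x1 x2)")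
proof
  assume "pareto_eig p r s q l"
  then consider "0 \<le> s" "l = p" | "0 \<le> r" "l = q"
    | t where "t > 0" "(p - l) * t + r = 0" "s * t + (q - l) = 0"
    unfolding pareto_eig_def by blast
  then show "\<exists>x1 x2. ?C x1 x2"
  proof cases
    case 1 then show ?thesis by (intro exI[of _ 1] exI[of _ 0]) simp
  next
    case 2 then show ?thesis by (intro exI[of _ 0] exI[of _ 1]) simp
  next
    case 3 then show ?thesis by (intro exI[of _ t] exI[of _ 1]) simp
  qed
next
  assume "\<exists>x1 x2. ?C x1 x2"
  then obtain x1 x2 where x: "0 \<le> x1" "0 \<le> x2" "x1 \<noteq> 0 \<or> x2 \<noteq> 0"
      and y: "0 \<le> (p - l) * x1 + r * x2" "0 \<le> s * x1 + (q - l) * x2"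
      and orth: "x1 * ((p - l) * x1 + r * x2) + x2 * (s * x1 + (q - l) * x2) = 0"
    by blast
  have "0 \<le> x1 * ((p - l) * x1 + r * x2)" "0 \<le> x2 * (s * x1 + (q - l) * x2)"
    using x y by simp_all
  then have e1: "x1 * ((p - l) * x1 + r * x2) = 0" and e2: "x2 * (s * x1 + (q - l) * x2) = 0"
    using orth by linarith+
  consider "x2 = 0" "x1 > 0" | "x1 = 0" "x2 > 0" | "x1 > 0" "x2 > 0" using x by fastforce
  then show "pareto_eig p r s q l"
  proof cases
    case 1 then show ?thesis using e1 y(2) unfolding pareto_eig_def by (auto simp: zero_le_mult_iff)
  next
    case 2 then show ?thesis using e2 y(1) unfolding pareto_eig_def by (auto simp: zero_le_mult_iff)
  next
    case 3
    then have "(p - l) * x1 + r * x2 = 0" "s * x1 + (q - l) * x2 = 0" using e1 e2 by simp_all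
    then show ?thesis
      by (intro pareto_eigI_pos[of "x1 / x2"]) (use 3 in \<open>simp_all add: field_simps\<close>)
  qed
qed

section \<open>Light-cone coordinates\<close>

lemma matrix_vector_mult_2:
  "((A::'a::comm_semiring_1^2^2) *v x)$1 = A$1$1 * x$1 + A$1$2 * x$2"
  "(A *v x)$2 = A$2$1 * x$1 + A$2$2 * x$2"
  by (simp_all add: matrix_vector_mult_def sum_2)

lemma matrix_matrix_mult_2:
  "((A::'a::comm_semiring_1^2^'n) ** (B::'a^'m^2))$i$j = A$i$1 * B$1$j + A$i$2 * B$2$j"
  by (simp add: matrix_matrix_mult_def sum_2)

lemma inner_2: "(x::real^2) \<bullet> y = x$1 * y$1 + x$2 * y$2"
  by (simp add: inner_vec_def sum_2)

lemma vec_eq_2: "(x::'a^2) = y \<longleftrightarrow> x$1 = y$1 \<and> x$2 = y$2"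
  by (simp add: vec_eq_iff forall_2)

lemma mat_eq_2:
  "(A::'a^2^2) = B \<longleftrightarrow> A$1$1 = B$1$1 \<and> A$1$2 = B$1$2 \<and> A$2$1 = B$2$1 \<and> A$2$2 = B$2$2"
  by (simp add: vec_eq_iff forall_2)

lemma mat2_nth [simp]:
  "mat2 a b c d $1$1 = a" "mat2 a b c d $1$2 = b" "mat2 a b c d $2$1 = c" "mat2 a b c d $2$2 = d"
  by (simp_all add: mat2_def)

lemma mat1_nth_2:
  "(mat 1 :: real^2^2)$1$1 = 1" "(mat 1 :: real^2^2)$1$2 = 0"
  "(mat 1 :: real^2^2)$2$1 = 0" "(mat 1 :: real^2^2)$2$2 = 1"
  by (simp_all add: mat_def)

text \<open>The entries \<open>[[p, r], [s, q]]\<close> of \<open>A\<close> in the basis \<open>(1, 1), (-1, 1)\<close>, which maps the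
  nonnegative quadrant onto the Lorentz cone.\<close>

definition lc11 :: "real^2^2 \<Rightarrow> real" where
  "lc11 A = (A$1$1 + A$1$2 + A$2$1 + A$2$2) / 2"

definition lc12 :: "real^2^2 \<Rightarrow> real" where
  "lc12 A = (A$1$2 - A$1$1 + A$2$2 - A$2$1) / 2"

definition lc21 :: "real^2^2 \<Rightarrow> real" where
  "lc21 A = (A$2$1 + A$2$2 - A$1$1 - A$1$2) / 2"

definition lc22 :: "real^2^2 \<Rightarrow> real" where
  "lc22 A = (A$2$2 - A$2$1 - A$1$2 + A$1$1) / 2"

lemmas lc_defs = lc11_def lc12_def lc21_def lc22_def

definition of_lc :: "real \<Rightarrow> real \<Rightarrow> real \<Rightarrow> real \<Rightarrow> real^2^2" where
  "of_lc p r s q =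
     mat2 ((p - s - r + q) / 2) ((p - s + r - q) / 2) ((p + s - r - q) / 2) ((p + s + r + q) / 2)"

lemma lc_of_lc [simp]:
  "lc11 (of_lc p r s q) = p" "lc12 (of_lc p r s q) = r"
  "lc21 (of_lc p r s q) = s" "lc22 (of_lc p r s q) = q"
  by (simp_all add: of_lc_def lc_defs field_simps)

lemma of_lc_lc: "of_lc (lc11 A) (lc12 A) (lc21 A) (lc22 A) = A"
  by (simp add: of_lc_def lc_defs mat_eq_2 field_simps)

lemma lc_eqI:
  "lc11 A = lc11 B \<Longrightarrow> lc12 A = lc12 B \<Longrightarrow> lc21 A = lc21 B \<Longrightarrow> lc22 A = lc22 B \<Longrightarrow> A = B"
  by (metis of_lc_lc)

lemma lc_add [simp]:
  "lc11 (A + B) = lc11 A + lc11 B" "lc12 (A + B) = lc12 A + lc12 B"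
  "lc21 (A + B) = lc21 A + lc21 B" "lc22 (A + B) = lc22 A + lc22 B"
  by (simp_all add: lc_defs field_simps)

lemma lc_scaleR [simp]:
  "lc11 (c *\<^sub>R A) = c * lc11 A" "lc12 (c *\<^sub>R A) = c * lc12 A"
  "lc21 (c *\<^sub>R A) = c * lc21 A" "lc22 (c *\<^sub>R A) = c * lc22 A"
  by (simp_all add: lc_defs field_simps)

lemma L_eigenvalue_iff_pareto_eig:
  "L_eigenvalue A l \<longleftrightarrow> pareto_eig (lc11 A) (lc12 A) (lc21 A) (lc22 A) l"
proof -
  let ?p = "lc11 A" and ?r = "lc12 A" and ?s = "lc21 A" and ?q = "lc22 A"
  let ?C = "\<lambda>x1 x2. 0 \<le> x1 \<and> 0 \<le> x2 \<and> (x1 \<noteq> 0 \<or> x2 \<noteq> 0) \<and>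
      0 \<le> (?p - l) * x1 + ?r * x2 \<and> 0 \<le> ?s * x1 + (?q - l) * x2 \<and>
      x1 * ((?p - l) * x1 + ?r * x2) + x2 * (?s * x1 + (?q - l) * x2) = 0"
  have "L_eigenvalue A l \<longleftrightarrow> (\<exists>x1 x2. ?C x1 x2)"
  proof
    assume "L_eigenvalue A l"
    then obtain x :: "real^2" where x: "x \<noteq> 0" "x \<in> lorentz_cone"
      "(A - l *\<^sub>R mat 1) *v x \<in> lorentz_cone" "x \<bullet> ((A - l *\<^sub>R mat 1) *v x) = 0"
      unfolding L_eigenvalue_def by blast
    have "\<bar>x$1\<bar> \<le> x$2" using x(2) by (simp add: lorentz_cone_def)
    moreover have "\<bar>A$1$1*x$1 - l*x$1 + A$1$2*x$2\<bar> \<le> A$2$1*x$1 + A$2$2*x$2 - l*x$2"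
      using x(3) by (simp add: lorentz_cone_def matrix_vector_mult_2 mat1_nth_2 algebra_simps)
    moreover have "x$1 * (A$1$1*x$1 - l*x$1 + A$1$2*x$2) + x$2 * (A$2$1*x$1 + A$2$2*x$2 - l*x$2) = 0"
      using x(4) by (simp add: inner_2 matrix_vector_mult_2 mat1_nth_2 algebra_simps)
    moreover have "x$1 \<noteq> 0 \<or> x$2 \<noteq> 0" using x(1) by (simp add: vec_eq_2)
    ultimately have "?C ((x$1 + x$2) / 2) ((x$2 - x$1) / 2)"
      unfolding lc_defs by (auto simp: abs_le_iff field_simps)
    then show "\<exists>x1 x2. ?C x1 x2" by blast
  next
    assume "\<exists>x1 x2. ?C x1 x2"
    then obtain x1 x2 where h: "?C x1 x2" by blast
    define x :: "real^2" where "x = vector [x1 - x2, x1 + x2]"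
    have "x \<bullet> ((A - l *\<^sub>R mat 1) *v x) =
        2 * (x1 * ((?p - l) * x1 + ?r * x2) + x2 * (?s * x1 + (?q - l) * x2))"
      unfolding lc_defs by (simp add: x_def matrix_vector_mult_2 mat1_nth_2 inner_2 field_simps)
    moreover have "x \<noteq> 0" using h by (auto simp: x_def vec_eq_2)
    moreover have "x \<in> lorentz_cone" using h by (auto simp: x_def lorentz_cone_def abs_le_iff)
    moreover have "(A - l *\<^sub>R mat 1) *v x \<in> lorentz_cone"
      using h unfolding lorentz_cone_def lc_defs
      by (simp add: x_def matrix_vector_mult_2 mat1_nth_2 abs_le_iff field_simps)
    ultimately show "L_eigenvalue A l" using h unfolding L_eigenvalue_def by auto
  qed
  then show ?thesis by (simp add: pareto_eig_iff_complementarity)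
qed

lemma L_spectrum_lc: "L_spectrum A = {l. pareto_eig (lc11 A) (lc12 A) (lc21 A) (lc22 A) l}"
  by (simp add: L_spectrum_def L_eigenvalue_iff_pareto_eig)

lemma sym_mats_iff: "A \<in> sym_mats \<longleftrightarrow> A$1$2 = A$2$1"
  by (auto simp: sym_mats_def transpose_def vec_eq_iff forall_2)

lemma lc21_sym: "A \<in> sym_mats \<Longrightarrow> lc21 A = lc12 A"
  by (simp add: sym_mats_iff lc_defs)

lemma of_lc_sym: "of_lc p h h q \<in> sym_mats"
  by (simp add: sym_mats_iff of_lc_def)

lemma sym_mats_add: "A \<in> sym_mats \<Longrightarrow> B \<in> sym_mats \<Longrightarrow> A + B \<in> sym_mats"
  by (simp add: sym_mats_iff)

lemma sym_mats_scaleR: "A \<in> sym_mats \<Longrightarrow> c *\<^sub>R A \<in> sym_mats"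
  by (simp add: sym_mats_iff)

section \<open>Conjugation by \<open>P\<close> and \<open>Q\<close>\<close>

text \<open>For \<open>\<alpha>\<^sup>2 - \<beta>\<^sup>2 = 1\<close>, \<open>P = mat2 \<alpha> \<beta> \<beta> \<alpha>\<close> is a Lorentz boost (up to sign) and
  \<open>Q = mat2 (-\<alpha>) (-\<beta>) \<beta> \<alpha>\<close> is \<open>diag (-1, 1) P\<close>, an involution.\<close>

lemma matrix_inv_unique:
  fixes M N :: "'a::semiring_1^'n^'n"
  assumes "M ** N = mat 1" "N ** M = mat 1"
  shows "matrix_inv M = N"
proof -
  have inv: "matrix_inv M ** M = mat 1"
    unfolding matrix_inv_def by (rule someI2[of _ N]) (use assms in blast)+
  have "matrix_inv M = matrix_inv M ** (M ** N)" by (simp add: assms(1) matrix_mul_rid)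
  also have "\<dots> = N" by (simp add: matrix_mul_assoc inv matrix_mul_lid)
  finally show ?thesis .
qed

lemma matrix_inv_boost:
  assumes "\<alpha>\<^sup>2 - \<beta>\<^sup>2 = (1::real)"
  shows "matrix_inv (mat2 \<alpha> \<beta> \<beta> \<alpha>) = mat2 \<alpha> (-\<beta>) (-\<beta>) \<alpha>"
  by (rule matrix_inv_unique)
    (use assms in \<open>simp_all add: mat_eq_2 matrix_matrix_mult_2 mat1_nth_2 power2_eq_square algebra_simps\<close>)

lemma matrix_inv_flip_boost:
  assumes "\<alpha>\<^sup>2 - \<beta>\<^sup>2 = (1::real)"
  shows "matrix_inv (mat2 (-\<alpha>) (-\<beta>) \<beta> \<alpha>) = mat2 (-\<alpha>) (-\<beta>) \<beta> \<alpha>"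
  by (rule matrix_inv_unique)
    (use assms in \<open>simp_all add: mat_eq_2 matrix_matrix_mult_2 mat1_nth_2 power2_eq_square algebra_simps\<close>)

lemma boost_param_inverse:
  assumes "\<alpha>\<^sup>2 - \<beta>\<^sup>2 = (1::real)"
  shows "(\<alpha> + \<beta>) * (\<alpha> - \<beta>) = 1" "(\<alpha> - \<beta>)\<^sup>2 = 1 / (\<alpha> + \<beta>)\<^sup>2" "(\<alpha> + \<beta>)\<^sup>2 > 0"
proof -
  show prod: "(\<alpha> + \<beta>) * (\<alpha> - \<beta>) = 1" using assms by (simp add: power2_eq_square algebra_simps)
  then have nz: "\<alpha> + \<beta> \<noteq> 0" by auto
  with prod have "\<alpha> - \<beta> = 1 / (\<alpha> + \<beta>)" by (simp add: field_simps)
  then show "(\<alpha> - \<beta>)\<^sup>2 = 1 / (\<alpha> + \<beta>)\<^sup>2" by (simp add: power_divide)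
  show "(\<alpha> + \<beta>)\<^sup>2 > 0" using nz by simp
qed

lemma lc_boost_conj:
  fixes A :: "real^2^2"
  assumes ab: "\<alpha>\<^sup>2 - \<beta>\<^sup>2 = 1"
  defines "C \<equiv> mat2 \<alpha> \<beta> \<beta> \<alpha> ** A ** matrix_inv (mat2 \<alpha> \<beta> \<beta> \<alpha>)"
  shows "lc11 C = lc11 A" "lc12 C = (\<alpha> + \<beta>)\<^sup>2 * lc12 A"
    "lc21 C = lc21 A / (\<alpha> + \<beta>)\<^sup>2" "lc22 C = lc22 A"
proof -
  have "lc11 C = (\<alpha> + \<beta>) * (\<alpha> - \<beta>) * lc11 A" "lc12 C = (\<alpha> + \<beta>)\<^sup>2 * lc12 A"
    "lc21 C = (\<alpha> - \<beta>)\<^sup>2 * lc21 A" "lc22 C = (\<alpha> + \<beta>) * (\<alpha> - \<beta>) * lc22 A"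
    unfolding C_def matrix_inv_boost[OF ab]
    by (simp_all add: matrix_matrix_mult_2 lc_defs power2_eq_square field_simps; simp add: algebra_simps)+
  then show "lc11 C = lc11 A" "lc12 C = (\<alpha> + \<beta>)\<^sup>2 * lc12 A"
    "lc21 C = lc21 A / (\<alpha> + \<beta>)\<^sup>2" "lc22 C = lc22 A"
    using boost_param_inverse[OF ab] by simp_all
qed

lemma lc_flip_boost_conj:
  fixes A :: "real^2^2"
  assumes ab: "\<alpha>\<^sup>2 - \<beta>\<^sup>2 = 1"
  defines "C \<equiv> mat2 (-\<alpha>) (-\<beta>) \<beta> \<alpha> ** A ** matrix_inv (mat2 (-\<alpha>) (-\<beta>) \<beta> \<alpha>)"
  shows "lc11 C = lc22 A" "lc12 C = lc21 A / (\<alpha> + \<beta>)\<^sup>2"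
    "lc21 C = (\<alpha> + \<beta>)\<^sup>2 * lc12 A" "lc22 C = lc11 A"
proof -
  have "lc11 C = (\<alpha> + \<beta>) * (\<alpha> - \<beta>) * lc22 A" "lc12 C = (\<alpha> - \<beta>)\<^sup>2 * lc21 A"
    "lc21 C = (\<alpha> + \<beta>)\<^sup>2 * lc12 A" "lc22 C = (\<alpha> + \<beta>) * (\<alpha> - \<beta>) * lc11 A"
    unfolding C_def matrix_inv_flip_boost[OF ab]
    by (simp_all add: matrix_matrix_mult_2 lc_defs power2_eq_square field_simps; simp add: algebra_simps)+
  then show "lc11 C = lc22 A" "lc12 C = lc21 A / (\<alpha> + \<beta>)\<^sup>2"
    "lc21 C = (\<alpha> + \<beta>)\<^sup>2 * lc12 A" "lc22 C = lc11 A"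
    using boost_param_inverse[OF ab] by simp_all
qed

lemma L_spectrum_boost_conj:
  assumes "\<alpha>\<^sup>2 - \<beta>\<^sup>2 = (1::real)"
  shows "L_spectrum (mat2 \<alpha> \<beta> \<beta> \<alpha> ** A ** matrix_inv (mat2 \<alpha> \<beta> \<beta> \<alpha>)) = L_spectrum A"
  unfolding L_spectrum_lc lc_boost_conj[OF assms]
  by (intro set_eqI) (simp add: pareto_eig_diag_scale[OF boost_param_inverse(3)[OF assms]])

lemma L_spectrum_flip_boost_conj:
  assumes "\<alpha>\<^sup>2 - \<beta>\<^sup>2 = (1::real)"
  shows "L_spectrum (mat2 (-\<alpha>) (-\<beta>) \<beta> \<alpha> ** A ** matrix_inv (mat2 (-\<alpha>) (-\<beta>) \<beta> \<alpha>)) = L_spectrum A"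
  unfolding L_spectrum_lc lc_flip_boost_conj[OF assms]
  by (intro set_eqI) (simp add: pareto_eig_swap pareto_eig_diag_scale[OF boost_param_inverse(3)[OF assms]])

lemma boost_param_exists:
  assumes "k > (0::real)"
  obtains \<alpha> \<beta> where "\<alpha>\<^sup>2 - \<beta>\<^sup>2 = 1" "(\<alpha> + \<beta>)\<^sup>2 = k"
proof
  let ?m = "sqrt k"
  have m: "?m > 0" "?m\<^sup>2 = k" using assms by simp_all
  show "((?m + 1 / ?m) / 2)\<^sup>2 - ((?m - 1 / ?m) / 2)\<^sup>2 = 1"
    using m(1) by (simp add: power2_eq_square field_simps)
  have "(?m + 1 / ?m) / 2 + (?m - 1 / ?m) / 2 = ?m" by (simp add: field_simps)
  then show "((?m + 1 / ?m) / 2 + (?m - 1 / ?m) / 2)\<^sup>2 = k" using m(2) by simp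
qed

section \<open>Linear maps preserving Pareto spectra\<close>

locale pareto_preserver =
  fixes a1 a2 a3 a4 b1 b2 b3 b4 c1 c2 c3 c4 d1 d2 d3 d4 :: real
  assumes preserves: "pareto_eig p r s q l \<longleftrightarrow>
    pareto_eig (p*a1 + r*a2 + s*a3 + q*a4) (p*b1 + r*b2 + s*b3 + q*b4)
      (p*c1 + r*c2 + s*c3 + q*c4) (p*d1 + r*d2 + s*d3 + q*d4) l"
begin

lemma swap_input: "pareto_preserver a4 a3 a2 a1 b4 b3 b2 b1 c4 c3 c2 c1 d4 d3 d2 d1"
proof
  fix p r s q l
  show "pareto_eig p r s q l \<longleftrightarrow>
    pareto_eig (p*a4 + r*a3 + s*a2 + q*a1) (p*b4 + r*b3 + s*b2 + q*b1)
      (p*c4 + r*c3 + s*c2 + q*c1) (p*d4 + r*d3 + s*d2 + q*d1) l"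
    using preserves[of q s r p l] pareto_eig_swap[of q s r p l] by (simp add: algebra_simps)
qed

lemma image_spectrum_scalar:
  assumes "\<And>l. pareto_eig p r s q l \<longleftrightarrow> l = c"
    and "\<And>l. pareto_eig (-p) (-r) (-s) (-q) l \<longleftrightarrow> l = -c"
  shows "p*a1 + r*a2 + s*a3 + q*a4 = c" "p*d1 + r*d2 + s*d3 + q*d4 = c"
    "(p*b1 + r*b2 + s*b3 + q*b4) * (p*c1 + r*c2 + s*c3 + q*c4) \<le> 0"
proof -
  let ?p = "p*a1 + r*a2 + s*a3 + q*a4" and ?r = "p*b1 + r*b2 + s*b3 + q*b4"
    and ?s = "p*c1 + r*c2 + s*c3 + q*c4" and ?q = "p*d1 + r*d2 + s*d3 + q*d4"
  have spec: "pareto_eig ?p ?r ?s ?q l \<Longrightarrow> l = c" for l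
    using preserves[of p r s q l] assms(1)[of l] by simp
  have neg_spec: "pareto_eig (-?p) (-?r) (-?s) (-?q) l \<Longrightarrow> l = -c" for l
    using preserves[of "-p" "-r" "-s" "-q" l] assms(2)[of l] by (simp add: algebra_simps)
  show "?p = c" "?q = c" "?r * ?s \<le> 0"
    using pareto_spectrum_scalar[of ?p ?r ?s ?q c] spec neg_spec by blast+
qed

lemma off_diag_images:
  shows "a2 = 0" "d2 = 0" "a3 = 0" "d3 = 0" "b2 * c2 = 0" "b3 * c3 = 0"
    "b2 * c3 + b3 * c2 = 1" "b2 + b3 > 0" "c2 + c3 > 0"
proof -
  have 2: "a2 = 0" "d2 = 0" "b2 * c2 \<le> 0"
    using image_spectrum_scalar[of 0 1 0 0 0] by (simp_all add: pareto_eig_nilpotent)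
  have 3: "a3 = 0" "d3 = 0" "b3 * c3 \<le> 0"
    using image_spectrum_scalar[of 0 0 1 0 0] by (simp_all add: pareto_eig_nilpotent)
  have "pareto_eig 0 1 1 0 1" by (rule pareto_eigI_pos[of 1]) auto
  then have "pareto_eig 0 (b2 + b3) (c2 + c3) 0 1" using preserves[of 0 1 1 0 1] 2 3 by simp
  then obtain t where t: "t > 0" "b2 + b3 = t" "(c2 + c3) * t = 1"
    by (rule pareto_eig_posE) auto
  show "a2 = 0" "d2 = 0" "a3 = 0" "d3 = 0" using 2 3 by simp_all
  show "b2 + b3 > 0" using t by simp
  show "c2 + c3 > 0" using t by (metis zero_less_mult_pos2 zero_less_one)
  have "pareto_eig 0 1 4 0 2" by (rule pareto_eigI_pos[of "1/2"]) auto
  then have "pareto_eig 0 (b2 + 4*b3) (c2 + 4*c3) 0 2"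
    using preserves[of 0 1 4 0 2] 2 3 by (simp add: mult.commute)
  then have "(b2 + 4*b3) * (c2 + 4*c3) = 4" using pareto_eig_off_diag_prod by fastforce
  moreover have "pareto_eig 0 4 1 0 2" by (rule pareto_eigI_pos[of 2]) auto
  then have "pareto_eig 0 (4*b2 + b3) (4*c2 + c3) 0 2"
    using preserves[of 0 4 1 0 2] 2 3 by (simp add: mult.commute)
  then have "(4*b2 + b3) * (4*c2 + c3) = 4" using pareto_eig_off_diag_prod by fastforce
  moreover have "(b2 + b3) * (c2 + c3) = 1" using t by (simp add: mult.commute)
  ultimately have "b2*c2 + 4*(b2*c3) + 4*(b3*c2) + 16*(b3*c3) = 4"
    "16*(b2*c2) + 4*(b2*c3) + 4*(b3*c2) + b3*c3 = 4"
    "b2*c2 + b2*c3 + b3*c2 + b3*c3 = 1"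
    by (simp_all add: algebra_simps)
  then show "b2 * c2 = 0" "b3 * c3 = 0" "b2 * c3 + b3 * c2 = 1" using 2 3 by linarith+
qed

lemma identity_image: "a1 + a4 = 1" "d1 + d4 = 1"
  using image_spectrum_scalar[of 1 0 0 1 1] by (simp_all add: pareto_eig_scalar)

lemma unit11_image: "a1 = 0 \<or> a1 = 1" "d1 = 0 \<or> d1 = 1"
proof -
  have "pareto_eig a1 b1 c1 d1 l \<longleftrightarrow> l = 1 \<or> l = 0"
    "pareto_eig (-a1) (-b1) (-c1) (-d1) l \<longleftrightarrow> l = -1 \<or> l = 0" for l
    using preserves[of 1 0 0 0 l] preserves[of "-1" 0 0 0 l] pareto_eig_unit11 by simp_all
  then show "a1 = 0 \<or> a1 = 1" "d1 = 0 \<or> d1 = 1"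
    using pareto_eig_diag_entries[of a1 b1 c1 d1] by auto
qed

text \<open>The case \<open>c\<^sub>2 = 0\<close>; the case \<open>c\<^sub>3 = 0\<close> reduces to it by \<open>swap_input\<close>.\<close>

context
  assumes c2: "c2 = 0"
begin

lemma diag_case_off_diag: "b3 = 0" "b2 > 0" "b2 * c3 = 1"
  using off_diag_images c2 by auto

text \<open>Test matrices \<open>[[1, x], [y, 1]]\<close> whose image is \<open>[[1, k], [k, 1]]\<close>, with eigenvalue
  \<open>1 + k\<close>, force \<open>(k - R) (k - T) = k\<^sup>2\<close> for \<open>R = b\<^sub>1 + b\<^sub>4\<close>, \<open>T = c\<^sub>1 + c\<^sub>4\<close>.\<close>

lemma diag_case_identity_image: "b1 + b4 = 0" "c1 + c4 = 0"
proof -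
  define R where "R = b1 + b4"
  define T where "T = c1 + c4"
  note off = off_diag_images(1-4) diag_case_off_diag
  have prod: "(k - R) * (k - T) = k\<^sup>2" if "k \<noteq> 0" for k
  proof -
    define x where "x = (k - R) / b2"
    define y where "y = (k - T) * b2"
    have "y * c3 = k - T" using off by (simp add: y_def mult.assoc)
    then have "1*a1 + x*a2 + y*a3 + 1*a4 = 1" "1*b1 + x*b2 + y*b3 + 1*b4 = k"
      "1*c1 + x*c2 + y*c3 + 1*c4 = k" "1*d1 + x*d2 + y*d3 + 1*d4 = 1"
      using off identity_image c2 by (simp_all add: x_def R_def T_def)
    then have "pareto_eig 1 x y 1 (1 + k) \<longleftrightarrow> pareto_eig 1 k k 1 (1 + k)"
      using preserves[of 1 x y 1 "1 + k"] by simp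
    moreover have "pareto_eig 1 k k 1 (1 + k)" by (rule pareto_eigI_pos[of 1]) auto
    ultimately have "x * y = (1 + k - 1) * (1 + k - 1)"
      by (intro pareto_eig_off_diag_prod) (use that in auto)
    then show ?thesis using off by (simp add: x_def y_def power2_eq_square)
  qed
  have "R * T = R + T" "R * T = 2 * (R + T)"
    using prod[of 1] prod[of 2] by (simp_all add: algebra_simps power2_eq_square)
  then have "T = - R" by (simp add: algebra_simps)
  with \<open>R * T = R + T\<close> have "R = 0" "T = 0" by simp_all
  then show "b1 + b4 = 0" "c1 + c4 = 0" by (simp_all add: R_def T_def)
qed

text \<open>For a test matrix \<open>[[1, x], [y, 0]]\<close> with Pareto eigenvalue \<open>l \<notin> {0, 1}\<close> the image has
  off-diagonal product \<open>(l - a\<^sub>1) (l - d\<^sub>1)\<close>; four such tests determine \<open>b\<^sub>1 c\<^sub>3\<close>, \<open>b\<^sub>2 c\<^sub>1\<close>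
  and \<open>a\<^sub>1 + d\<^sub>1\<close>.\<close>

lemma diag_case_unit11_image: "a1 = 1" "d1 = 0" "b1 = 0" "c1 = 0"
proof -
  note off = off_diag_images(1-4) diag_case_off_diag
  have test: "(b1 + x * b2) * (c1 + y * c3) = (l - a1) * (l - d1)"
    if "pareto_eig 1 x y 0 l" "l \<noteq> 0" "l \<noteq> 1" for x y l
  proof (rule pareto_eig_off_diag_prod)
    show "pareto_eig a1 (b1 + x * b2) (c1 + y * c3) d1 l"
      using preserves[of 1 x y 0 l] that(1) off c2 by simp
    show "l \<noteq> a1" "l \<noteq> d1" using unit11_image that by auto
  qed
  have t1: "pareto_eig 1 1 2 0 2" and t3: "pareto_eig 1 2 3 0 3"
    by (rule pareto_eigI_pos[of 1]; simp)+
  have t2: "pareto_eig 1 2 1 0 2" by (rule pareto_eigI_pos[of 2]) simp_all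
  have t4: "pareto_eig 1 1 6 0 3" by (rule pareto_eigI_pos[of "1/2"]) simp_all
  have "(b1 + b2) * (c1 + 2 * c3) = (2 - a1) * (2 - d1)"
    "(b1 + 2 * b2) * (c1 + c3) = (2 - a1) * (2 - d1)"
    "(b1 + 2 * b2) * (c1 + 3 * c3) = (3 - a1) * (3 - d1)"
    "(b1 + b2) * (c1 + 6 * c3) = (3 - a1) * (3 - d1)"
    using test[OF t1] test[OF t2] test[OF t3] test[OF t4] by simp_all
  then have v: "b1*c1 + 2*(b1*c3) + b2*c1 + 2 = (2 - a1) * (2 - d1)"
    "b1*c1 + b1*c3 + 2*(b2*c1) + 2 = (2 - a1) * (2 - d1)"
    "b1*c1 + 3*(b1*c3) + 2*(b2*c1) + 6 = (3 - a1) * (3 - d1)"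
    "b1*c1 + 6*(b1*c3) + b2*c1 + 6 = (3 - a1) * (3 - d1)"
    using off by (simp_all add: algebra_simps)
  have "(2 - a1) * (2 - d1) + 4 = (3 - a1) * (3 - d1)" using v by linarith
  then have "a1 + d1 = 1" by (simp add: algebra_simps)
  have "b1 * c3 = 0" "b2 * c1 = 0" using v by linarith+
  then show b1: "b1 = 0" and c1: "c1 = 0" using off by auto
  have "\<not> (a1 = 0 \<and> d1 = 1)"
  proof
    assume "a1 = 0 \<and> d1 = 1"
    then have "pareto_eig a1 (b1 + b2) (c1 - c3) d1 1" using off b1 by (simp add: pareto_eig_def)
    then have "pareto_eig 1 1 (-1) 0 1" using preserves[of 1 1 "-1" 0 1] off c2 by simp
    then show False by (auto simp: pareto_eig_def)
  qed
  then show "a1 = 1" "d1 = 0" using unit11_image \<open>a1 + d1 = 1\<close> by auto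
qed

lemma diag_case_images: "a1 = 1" "b1 = 0" "c1 = 0" "d1 = 0" "a4 = 0" "b4 = 0" "c4 = 0" "d4 = 1"
  using diag_case_unit11_image diag_case_identity_image identity_image by auto

end

lemma classification:
  obtains (scaling) "a1 = 1" "b1 = 0" "c1 = 0" "d1 = 0" "a2 = 0" "b2 > 0" "c2 = 0" "d2 = 0"
    "a3 = 0" "b3 = 0" "b2 * c3 = 1" "d3 = 0" "a4 = 0" "b4 = 0" "c4 = 0" "d4 = 1"
  | (exchange) "a1 = 0" "b1 = 0" "c1 = 0" "d1 = 1" "a2 = 0" "b2 = 0" "c2 > 0" "d2 = 0"
    "a3 = 0" "b3 * c2 = 1" "c3 = 0" "d3 = 0" "a4 = 1" "b4 = 0" "c4 = 0" "d4 = 0"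
proof -
  interpret swapped: pareto_preserver a4 a3 a2 a1 b4 b3 b2 b1 c4 c3 c2 c1 d4 d3 d2 d1
    by (rule swap_input)
  have "c2 = 0 \<or> c3 = 0" using off_diag_images(5-7) by auto
  then show thesis
  proof
    assume "c2 = 0"
    show thesis
      by (rule that(1))
        (use \<open>c2 = 0\<close> off_diag_images diag_case_off_diag diag_case_images in simp_all)
  next
    assume "c3 = 0"
    then have "b2 = 0" "b3 > 0" "b3 * c2 = 1" "c2 > 0"
      using swapped.diag_case_off_diag off_diag_images(9) by auto
    then show thesis
      by (intro that(2)) (use \<open>c3 = 0\<close> off_diag_images swapped.diag_case_images in simp_all)
  qed
qed

end

locale sym_pareto_preserver =
  fixes a1 a2 a4 b1 b2 b4 d1 d2 d4 :: real
  assumes preserves: "pareto_eig p h h q l \<longleftrightarrow>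
    pareto_eig (p*a1 + h*a2 + q*a4) (p*b1 + h*b2 + q*b4) (p*b1 + h*b2 + q*b4) (p*d1 + h*d2 + q*d4) l"
begin

lemma off_diag_image: "a2 = 0" "d2 = 0" "b2 = 1"
proof -
  have img: "pareto_eig a2 b2 b2 d2 l \<longleftrightarrow> l = 0 \<or> l = 1" for l
    using preserves[of 0 1 0 l] pareto_eig_exchange(1) by simp
  have neg_img: "pareto_eig (-a2) (-b2) (-b2) (-d2) l \<longleftrightarrow> l = -1" for l
    using preserves[of 0 "-1" 0 l] pareto_eig_exchange(2) by simp
  have b2: "b2 > 0"
  proof (rule ccontr)
    assume "\<not> b2 > 0"
    then have "pareto_eig (-a2) (-b2) (-b2) (-d2) (-a2)" "pareto_eig (-a2) (-b2) (-b2) (-d2) (-d2)"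
      by (auto simp: pareto_eig_def)
    then have "a2 = 1" "d2 = 1" using neg_img by auto
    moreover have "pareto_eig 1 b2 b2 1 (1 + b2)" by (rule pareto_eigI_pos[of 1]) auto
    ultimately have "b2 = 0 \<or> b2 = -1" using img by auto
    then show False using img[of 0] img[of 1] \<open>a2 = 1\<close> \<open>d2 = 1\<close> by (auto simp: pareto_eig_def)
  qed
  then have "pareto_eig a2 b2 b2 d2 a2" "pareto_eig a2 b2 b2 d2 d2" by (auto simp: pareto_eig_def)
  then have "a2 = 0 \<or> a2 = 1" "d2 = 0 \<or> d2 = 1" using img by auto
  moreover obtain t where t: "t > 0" "(1 - a2) * t = b2" "b2 * t = 1 - d2"
    using neg_img[of "-1"] b2 unfolding pareto_eig_def by (auto simp: algebra_simps)
  ultimately show "a2 = 0" "d2 = 0" using b2 by auto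
  with t have "b2 * b2 = 1" by simp
  then show "b2 = 1" using b2 power2_eq_1_iff[of b2] by (auto simp: power2_eq_square)
qed

lemma identity_image: "a1 + a4 = 1" "d1 + d4 = 1" "b1 + b4 = 0"
proof -
  have "pareto_eig (a1 + a4) (b1 + b4) (b1 + b4) (d1 + d4) l \<Longrightarrow> l = 1"
    "pareto_eig (-(a1 + a4)) (-(b1 + b4)) (-(b1 + b4)) (-(d1 + d4)) l \<Longrightarrow> l = -1" for l
    using preserves[of 1 0 1 l] preserves[of "-1" 0 "-1" l] pareto_eig_scalar
    by (simp_all add: algebra_simps)
  then have "a1 + a4 = 1" "d1 + d4 = 1" "(b1 + b4) * (b1 + b4) \<le> 0"
    using pareto_spectrum_scalar[of "a1 + a4" "b1 + b4" "b1 + b4" "d1 + d4" 1] by blast+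
  then show "a1 + a4 = 1" "d1 + d4 = 1" "b1 + b4 = 0"
    using zero_le_square[of "b1 + b4"] by simp_all
qed

lemma unit11_image: "a1 = 0 \<or> a1 = 1" "d1 = 0 \<or> d1 = 1"
proof -
  have "pareto_eig a1 b1 b1 d1 l \<longleftrightarrow> l = 1 \<or> l = 0"
    "pareto_eig (-a1) (-b1) (-b1) (-d1) l \<longleftrightarrow> l = -1 \<or> l = 0" for l
    using preserves[of 1 0 0 l] preserves[of "-1" 0 0 l] pareto_eig_unit11 by simp_all
  then show "a1 = 0 \<or> a1 = 1" "d1 = 0 \<or> d1 = 1"
    using pareto_eig_diag_entries[of a1 b1 b1 d1] by auto
qed

text \<open>Test matrices \<open>[[3, 2], [2, 0]]\<close> and \<open>[[8, 3], [3, 0]]\<close>, with Perron roots \<open>4\<close> and \<open>9\<close>;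
  only the two admissible diagonals \<open>(a\<^sub>1, d\<^sub>1)\<close> are compatible with both.\<close>

lemma unit11_image_exact: "b1 = 0" "(a1 = 1 \<and> d1 = 0) \<or> (a1 = 0 \<and> d1 = 1)"
proof -
  note off = off_diag_image
  have "pareto_eig 3 2 2 0 4" by (rule pareto_eigI_pos[of 2]) auto
  then have "pareto_eig (3*a1) (3*b1 + 2) (3*b1 + 2) (3*d1) 4" using preserves[of 3 2 0 4] off by simp
  then have "(3*b1 + 2) * (3*b1 + 2) = (4 - 3*a1) * (4 - 3*d1)"
    by (rule pareto_eig_off_diag_prod) (use unit11_image in auto)
  then have w1: "9*b1\<^sup>2 + 12*b1 + 4 = (4 - 3*a1) * (4 - 3*d1)"
    by (simp add: algebra_simps power2_eq_square)
  have "pareto_eig 8 3 3 0 9" by (rule pareto_eigI_pos[of 3]) auto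
  then have "pareto_eig (8*a1) (8*b1 + 3) (8*b1 + 3) (8*d1) 9" using preserves[of 8 3 0 9] off by simp
  then have "(8*b1 + 3) * (8*b1 + 3) = (9 - 8*a1) * (9 - 8*d1)"
    by (rule pareto_eig_off_diag_prod) (use unit11_image in auto)
  then have w2: "64*b1\<^sup>2 + 48*b1 + 9 = (9 - 8*a1) * (9 - 8*d1)"
    by (simp add: algebra_simps power2_eq_square)
  have "a1 \<noteq> d1"
  proof
    assume "a1 = d1"
    with unit11_image consider "a1 = 0" "d1 = 0" | "a1 = 1" "d1 = 1" by auto
    then show False
    proof cases
      case 1
      with w1 w2 have "b1 = 5/14" "b1\<^sup>2 = 6/7" by simp_all
      then show False by (simp only:) (simp add: power2_eq_square)
    next
      case 2
      with w1 w2 have "b1 = -5/14" "b1\<^sup>2 = 1/7" by simp_all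
      then show False by (simp only:) (simp add: power2_eq_square)
    qed
  qed
  with unit11_image show "(a1 = 1 \<and> d1 = 0) \<or> (a1 = 0 \<and> d1 = 1)" by auto
  then show "b1 = 0" using w1 w2 by auto
qed

lemma classification:
  obtains (identity) "a1 = 1" "a2 = 0" "a4 = 0" "b1 = 0" "b2 = 1" "b4 = 0" "d1 = 0" "d2 = 0" "d4 = 1"
  | (exchange) "a1 = 0" "a2 = 0" "a4 = 1" "b1 = 0" "b2 = 1" "b4 = 0" "d1 = 1" "d2 = 0" "d4 = 0"
  using off_diag_image identity_image unit11_image_exact by (metis add_0 add_cancel_left_right)

end

section \<open>The Lorentz spectrum preservers\<close>

lemma lc_decomposition:
  "A = lc11 A *\<^sub>R of_lc 1 0 0 0 + lc12 A *\<^sub>R of_lc 0 1 0 0 + lc21 A *\<^sub>R of_lc 0 0 1 0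
     + lc22 A *\<^sub>R of_lc 0 0 0 1"
  by (rule lc_eqI) simp_all

lemma lc_decomposition_sym:
  "A \<in> sym_mats \<Longrightarrow>
    A = lc11 A *\<^sub>R of_lc 1 0 0 0 + lc12 A *\<^sub>R of_lc 0 1 1 0 + lc22 A *\<^sub>R of_lc 0 0 0 1"
  by (rule lc_eqI) (simp_all add: lc21_sym)

lemma L_spectrum_preserver_full:
  fixes \<phi> :: "real^2^2 \<Rightarrow> real^2^2"
  assumes add: "\<And>A B. \<phi> (A + B) = \<phi> A + \<phi> B" and scale: "\<And>c A. \<phi> (c *\<^sub>R A) = c *\<^sub>R \<phi> A"
    and pres: "\<And>A. L_spectrum (\<phi> A) = L_spectrum A"
  obtains \<alpha> \<beta> :: real where "\<alpha>\<^sup>2 - \<beta>\<^sup>2 = 1"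
      "\<And>A. \<phi> A = mat2 \<alpha> \<beta> \<beta> \<alpha> ** A ** matrix_inv (mat2 \<alpha> \<beta> \<beta> \<alpha>)"
  | \<alpha> \<beta> :: real where "\<alpha>\<^sup>2 - \<beta>\<^sup>2 = 1"
      "\<And>A. \<phi> A = mat2 (-\<alpha>) (-\<beta>) \<beta> \<alpha> ** A ** matrix_inv (mat2 (-\<alpha>) (-\<beta>) \<beta> \<alpha>)"
proof -
  define F1 F2 F3 F4 where "F1 = \<phi> (of_lc 1 0 0 0)" "F2 = \<phi> (of_lc 0 1 0 0)"
    "F3 = \<phi> (of_lc 0 0 1 0)" "F4 = \<phi> (of_lc 0 0 0 1)"
  have "\<phi> A = lc11 A *\<^sub>R F1 + lc12 A *\<^sub>R F2 + lc21 A *\<^sub>R F3 + lc22 A *\<^sub>R F4" for A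
    using arg_cong[OF lc_decomposition[of A], of \<phi>] by (simp add: add scale F1_F2_F3_F4_def)
  then have lc_\<phi>:
    "lc11 (\<phi> A) = lc11 A * lc11 F1 + lc12 A * lc11 F2 + lc21 A * lc11 F3 + lc22 A * lc11 F4"
    "lc12 (\<phi> A) = lc11 A * lc12 F1 + lc12 A * lc12 F2 + lc21 A * lc12 F3 + lc22 A * lc12 F4"
    "lc21 (\<phi> A) = lc11 A * lc21 F1 + lc12 A * lc21 F2 + lc21 A * lc21 F3 + lc22 A * lc21 F4"
    "lc22 (\<phi> A) = lc11 A * lc22 F1 + lc12 A * lc22 F2 + lc21 A * lc22 F3 + lc22 A * lc22 F4" for A
    by simp_all
  interpret pareto_preserver "lc11 F1" "lc11 F2" "lc11 F3" "lc11 F4" "lc12 F1" "lc12 F2" "lc12 F3"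
    "lc12 F4" "lc21 F1" "lc21 F2" "lc21 F3" "lc21 F4" "lc22 F1" "lc22 F2" "lc22 F3" "lc22 F4"
  proof
    fix p r s q l
    have "l \<in> L_spectrum (\<phi> (of_lc p r s q)) \<longleftrightarrow> l \<in> L_spectrum (of_lc p r s q)" by (simp add: pres)
    then show "pareto_eig p r s q l \<longleftrightarrow> pareto_eig
      (p * lc11 F1 + r * lc11 F2 + s * lc11 F3 + q * lc11 F4)
      (p * lc12 F1 + r * lc12 F2 + s * lc12 F3 + q * lc12 F4)
      (p * lc21 F1 + r * lc21 F2 + s * lc21 F3 + q * lc21 F4)
      (p * lc22 F1 + r * lc22 F2 + s * lc22 F3 + q * lc22 F4) l"
      unfolding L_spectrum_lc lc_\<phi> by simp
  qed
  show thesis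
  proof (cases rule: classification)
    case scaling
    then have "lc12 F2 > 0" by simp
    then obtain \<alpha> \<beta> where ab: "\<alpha>\<^sup>2 - \<beta>\<^sup>2 = 1" "(\<alpha> + \<beta>)\<^sup>2 = lc12 F2"
      by (rule boost_param_exists)
    have "lc21 F3 = 1 / lc12 F2" using scaling by (simp add: field_simps)
    then have "\<phi> A = mat2 \<alpha> \<beta> \<beta> \<alpha> ** A ** matrix_inv (mat2 \<alpha> \<beta> \<beta> \<alpha>)" for A
      by (intro lc_eqI) (use scaling in \<open>simp_all add: lc_\<phi> lc_boost_conj[OF ab(1)] ab(2)\<close>)
    with ab(1) show thesis by (rule that(1))
  next
    case exchange
    then have "lc21 F2 > 0" by simp
    then obtain \<alpha> \<beta> where ab: "\<alpha>\<^sup>2 - \<beta>\<^sup>2 = 1" "(\<alpha> + \<beta>)\<^sup>2 = lc21 F2"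
      by (rule boost_param_exists)
    have "lc12 F3 = 1 / lc21 F2" using exchange by (simp add: field_simps)
    then have "\<phi> A = mat2 (-\<alpha>) (-\<beta>) \<beta> \<alpha> ** A ** matrix_inv (mat2 (-\<alpha>) (-\<beta>) \<beta> \<alpha>)" for A
      by (intro lc_eqI)
        (use exchange in \<open>simp_all add: lc_\<phi> lc_flip_boost_conj[OF ab(1)] ab(2) mult.commute\<close>)
    with ab(1) show thesis by (rule that(2))
  qed
qed

lemma L_spectrum_preserver_sym:
  fixes \<phi> :: "real^2^2 \<Rightarrow> real^2^2"
  assumes maps: "\<And>A. A \<in> sym_mats \<Longrightarrow> \<phi> A \<in> sym_mats"
    and add: "\<And>A B. A \<in> sym_mats \<Longrightarrow> B \<in> sym_mats \<Longrightarrow> \<phi> (A + B) = \<phi> A + \<phi> B"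
    and scale: "\<And>c A. A \<in> sym_mats \<Longrightarrow> \<phi> (c *\<^sub>R A) = c *\<^sub>R \<phi> A"
    and pres: "\<And>A. A \<in> sym_mats \<Longrightarrow> L_spectrum (\<phi> A) = L_spectrum A"
  obtains \<alpha> \<beta> :: real where "\<alpha>\<^sup>2 - \<beta>\<^sup>2 = 1" "\<beta> = 0"
      "\<And>A. A \<in> sym_mats \<Longrightarrow> \<phi> A = mat2 \<alpha> \<beta> \<beta> \<alpha> ** A ** matrix_inv (mat2 \<alpha> \<beta> \<beta> \<alpha>)"
  | \<alpha> \<beta> :: real where "\<alpha>\<^sup>2 - \<beta>\<^sup>2 = 1" "\<beta> = 0"
      "\<And>A. A \<in> sym_mats \<Longrightarrow>
        \<phi> A = mat2 (-\<alpha>) (-\<beta>) \<beta> \<alpha> ** A ** matrix_inv (mat2 (-\<alpha>) (-\<beta>) \<beta> \<alpha>)"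
proof -
  define F1 F2 F4 where "F1 = \<phi> (of_lc 1 0 0 0)" "F2 = \<phi> (of_lc 0 1 1 0)" "F4 = \<phi> (of_lc 0 0 0 1)"
  have "\<phi> A = lc11 A *\<^sub>R F1 + lc12 A *\<^sub>R F2 + lc22 A *\<^sub>R F4" if "A \<in> sym_mats" for A
    using arg_cong[OF lc_decomposition_sym[OF that], of \<phi>] of_lc_sym[of 1 0 0] of_lc_sym[of 0 1 0]
      of_lc_sym[of 0 0 1]
    by (simp add: add scale sym_mats_add sym_mats_scaleR F1_F2_F4_def)
  then have lc_\<phi>:
    "lc11 (\<phi> A) = lc11 A * lc11 F1 + lc12 A * lc11 F2 + lc22 A * lc11 F4"
    "lc12 (\<phi> A) = lc11 A * lc12 F1 + lc12 A * lc12 F2 + lc22 A * lc12 F4"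
    "lc21 (\<phi> A) = lc11 A * lc12 F1 + lc12 A * lc12 F2 + lc22 A * lc12 F4"
    "lc22 (\<phi> A) = lc11 A * lc22 F1 + lc12 A * lc22 F2 + lc22 A * lc22 F4" if "A \<in> sym_mats" for A
    using that lc21_sym[OF maps[OF that]] by simp_all
  interpret sym_pareto_preserver "lc11 F1" "lc11 F2" "lc11 F4" "lc12 F1" "lc12 F2" "lc12 F4"
    "lc22 F1" "lc22 F2" "lc22 F4"
  proof
    fix p h q l
    have "l \<in> L_spectrum (\<phi> (of_lc p h h q)) \<longleftrightarrow> l \<in> L_spectrum (of_lc p h h q)"
      by (simp add: pres of_lc_sym)
    then show "pareto_eig p h h q l \<longleftrightarrow> pareto_eig
      (p * lc11 F1 + h * lc11 F2 + q * lc11 F4) (p * lc12 F1 + h * lc12 F2 + q * lc12 F4)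
      (p * lc12 F1 + h * lc12 F2 + q * lc12 F4) (p * lc22 F1 + h * lc22 F2 + q * lc22 F4) l"
      unfolding L_spectrum_lc lc_\<phi>[OF of_lc_sym] by simp
  qed
  note P = lc_boost_conj[of 1 0, simplified] and Q = lc_flip_boost_conj[of 1 0, simplified]
  show thesis
  proof (cases rule: classification)
    case identity
    show thesis
      by (intro that(1)[of 1 0] lc_eqI) (use identity in \<open>simp_all add: lc_\<phi> P lc21_sym\<close>)
  next
    case exchange
    show thesis
      by (intro that(2)[of 1 0] lc_eqI) (use exchange in \<open>simp_all add: lc_\<phi> Q lc21_sym\<close>)
  qed
qed

lemma L_spectrum_preserver_full_iff:
  fixes \<phi> :: "real^2^2 \<Rightarrow> real^2^2"
  assumes add: "\<And>A B. \<phi> (A + B) = \<phi> A + \<phi> B" and scale: "\<And>c A. \<phi> (c *\<^sub>R A) = c *\<^sub>R \<phi> A"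
  shows "(\<forall>A. L_spectrum (\<phi> A) = L_spectrum A) \<longleftrightarrow>
    (\<exists>\<alpha> \<beta>::real. \<alpha>\<^sup>2 - \<beta>\<^sup>2 = 1 \<and>
       ((\<forall>A. \<phi> A = mat2 \<alpha> \<beta> \<beta> \<alpha> ** A ** matrix_inv (mat2 \<alpha> \<beta> \<beta> \<alpha>)) \<or>
        (\<forall>A. \<phi> A = mat2 (-\<alpha>) (-\<beta>) \<beta> \<alpha> ** A ** matrix_inv (mat2 (-\<alpha>) (-\<beta>) \<beta> \<alpha>))))"
    (is "?preserves \<longleftrightarrow> (\<exists>\<alpha> \<beta>. ?conj \<alpha> \<beta>)")
proof
  assume ?preserves
  then have "L_spectrum (\<phi> A) = L_spectrum A" for A by blast
  then show "\<exists>\<alpha> \<beta>. ?conj \<alpha> \<beta>" by (rule L_spectrum_preserver_full[OF add scale]) blast+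
qed (use L_spectrum_boost_conj L_spectrum_flip_boost_conj in auto)

lemma L_spectrum_preserver_sym_iff:
  fixes \<phi> :: "real^2^2 \<Rightarrow> real^2^2"
  assumes maps: "\<And>A. A \<in> sym_mats \<Longrightarrow> \<phi> A \<in> sym_mats"
    and add: "\<And>A B. A \<in> sym_mats \<Longrightarrow> B \<in> sym_mats \<Longrightarrow> \<phi> (A + B) = \<phi> A + \<phi> B"
    and scale: "\<And>c A. A \<in> sym_mats \<Longrightarrow> \<phi> (c *\<^sub>R A) = c *\<^sub>R \<phi> A"
  shows "(\<forall>A\<in>sym_mats. L_spectrum (\<phi> A) = L_spectrum A) \<longleftrightarrow>
    (\<exists>\<alpha> \<beta>::real. \<alpha>\<^sup>2 - \<beta>\<^sup>2 = 1 \<and> \<beta> = 0 \<and>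
       ((\<forall>A\<in>sym_mats. \<phi> A = mat2 \<alpha> \<beta> \<beta> \<alpha> ** A ** matrix_inv (mat2 \<alpha> \<beta> \<beta> \<alpha>)) \<or>
        (\<forall>A\<in>sym_mats. \<phi> A = mat2 (-\<alpha>) (-\<beta>) \<beta> \<alpha> ** A ** matrix_inv (mat2 (-\<alpha>) (-\<beta>) \<beta> \<alpha>))))"
    (is "?preserves \<longleftrightarrow> (\<exists>\<alpha> \<beta>. ?conj \<alpha> \<beta>)")
proof
  assume ?preserves
  then have pres: "L_spectrum (\<phi> A) = L_spectrum A" if "A \<in> sym_mats" for A using that by blast
  show "\<exists>\<alpha> \<beta>. ?conj \<alpha> \<beta>" by (rule L_spectrum_preserver_sym[OF maps add scale pres]) blast+
next
  assume "\<exists>\<alpha> \<beta>. ?conj \<alpha> \<beta>"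
  then obtain \<alpha> \<beta> :: real where ab: "\<alpha>\<^sup>2 - \<beta>\<^sup>2 = 1"
    and "(\<forall>A\<in>sym_mats. \<phi> A = mat2 \<alpha> \<beta> \<beta> \<alpha> ** A ** matrix_inv (mat2 \<alpha> \<beta> \<beta> \<alpha>)) \<or>
      (\<forall>A\<in>sym_mats. \<phi> A = mat2 (-\<alpha>) (-\<beta>) \<beta> \<alpha> ** A ** matrix_inv (mat2 (-\<alpha>) (-\<beta>) \<beta> \<alpha>))"
    by blast
  then show ?preserves using L_spectrum_boost_conj[OF ab] L_spectrum_flip_boost_conj[OF ab] by auto
qed

theorem theorem1p1:
  fixes W :: "(real^2^2) set" and \<phi> :: "real^2^2 \<Rightarrow> real^2^2"
  assumes W: "W = UNIV \<or> W = sym_mats"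
    and maps: "\<forall>A\<in>W. \<phi> A \<in> W"
    and lin: "\<forall>A\<in>W. \<forall>B\<in>W. \<forall>c::real.
                \<phi> (A + B) = \<phi> A + \<phi> B \<and> \<phi> (c *\<^sub>R A) = c *\<^sub>R \<phi> A"
  shows "(\<forall>A\<in>W. L_spectrum (\<phi> A) = L_spectrum A) \<longleftrightarrow>
    (\<exists>\<alpha> \<beta>::real. \<alpha>\<^sup>2 - \<beta>\<^sup>2 = 1 \<and> (W = sym_mats \<longrightarrow> \<beta> = 0) \<and>
       ((\<forall>A\<in>W. \<phi> A = mat2 \<alpha> \<beta> \<beta> \<alpha> ** A ** matrix_inv (mat2 \<alpha> \<beta> \<beta> \<alpha>)) \<or>
        (\<forall>A\<in>W. \<phi> A = mat2 (-\<alpha>) (-\<beta>) \<beta> \<alpha> ** A ** matrix_inv (mat2 (-\<alpha>) (-\<beta>) \<beta> \<alpha>))))"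
proof (cases "W = UNIV")
  case True
  have "mat2 0 1 0 0 \<notin> sym_mats" by (simp add: sym_mats_iff)
  then have "W \<noteq> sym_mats" using True by blast
  moreover have "\<phi> (A + B) = \<phi> A + \<phi> B" "\<phi> (c *\<^sub>R A) = c *\<^sub>R \<phi> A" for A B and c :: real
    using lin True by simp_all
  ultimately show ?thesis using L_spectrum_preserver_full_iff[of \<phi>] True by simp
next
  case False
  with W have "W = sym_mats" by blast
  moreover have "\<phi> A \<in> sym_mats" "\<phi> (c *\<^sub>R A) = c *\<^sub>R \<phi> A" if "A \<in> sym_mats" for A and c :: real
    using maps lin that \<open>W = sym_mats\<close> by simp_all
  moreover have "\<phi> (A + B) = \<phi> A + \<phi> B" if "A \<in> sym_mats" "B \<in> sym_mats" for A B
    using lin that \<open>W = sym_mats\<close> by simp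
  ultimately show ?thesis using L_spectrum_preserver_sym_iff[of \<phi>] by simp
qed

end
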